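(* Let $w>0$ and $c_w=\sum_{y=-\infty}^{\infty}e^{-y^2/(2w^2)}$. For integers $x,h$ with $|x|\leq h$ and $h$ even, $$\frac{1}{c_w}\sum_{y=-\infty}^{\infty}e^{-\frac{(y\pm x)^2+y^2}{4w^2}}\geq e^{-\frac{h^2}{8w^2}}.$$ *)

theory Defs
  imports "HOL-Analysis.Analysis"
begin

definition c_w :: "real \<Rightarrow> real" where
  "c_w w = (\<Sum>\<^sub>\<infinity>y\<in>(UNIV::int set). exp (- (real_of_int y)\<^sup>2 / (2 * w\<^sup>2)))"

end

theory Submission
  imports Defs
begin

(* Completing the square, (y + z)^2 + y^2 = 2 (y + z/2)^2 + z^2/2, turns the overlap of the two
   Gaussians into a shifted copy of the Gaussian times exp (-z^2/(8 w^2)). For even z the shift is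
   an integer, so the sum is exactly that multiple of c_w. For odd z the shift is a half-integer;
   pairing the terms at y and y - 1 and using convexity of exp yields the multiple
   exp (-(z^2 + 1)/(8 w^2)) of c_w instead, and an odd z with |z| <= h, h even, has z^2 + 1 <= h^2. *)

lemma summable_on_exp_neg_square_nat:
  fixes a :: real assumes "a > 0"
  shows "(\<lambda>n::nat. exp (- (real n)\<^sup>2 / a)) summable_on UNIV"
proof (rule summable_nonneg_imp_summable_on)
  show "summable (\<lambda>n::nat. exp (- (real n)\<^sup>2 / a))"
  proof (rule summable_comparison_test)
    show "summable (\<lambda>n. exp (- 1 / a) ^ n)"
      using \<open>a > 0\<close> by (intro summable_geometric) simp
    have "exp (- (real n)\<^sup>2 / a) \<le> exp (- 1 / a) ^ n" for n
    proof -
      have "real n \<le> (real n)\<^sup>2"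
        by (cases n) (auto simp: power2_eq_square)
      then have "- (real n)\<^sup>2 / a \<le> real n * (- 1 / a)"
        using \<open>a > 0\<close> by (simp add: divide_right_mono)
      then have "exp (- (real n)\<^sup>2 / a) \<le> exp (real n * (- 1 / a))"
        by (simp only: exp_le_cancel_iff)
      then show ?thesis
        by (simp only: exp_of_nat_mult)
    qed
    then show "\<exists>N. \<forall>n\<ge>N. norm (exp (- (real n)\<^sup>2 / a)) \<le> exp (- 1 / a) ^ n"
      by simp
  qed
qed simp

lemma summable_on_int_if_even:
  fixes f :: "int \<Rightarrow> real"
  assumes even_f: "\<And>n. f (- n) = f n"
    and summable_nat: "(\<lambda>n::nat. f (int n)) summable_on UNIV"
  shows "f summable_on UNIV"
proof -
  have "f summable_on range int"
    using summable_on_reindex[of int UNIV f] summable_nat by (simp add: o_def)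
  moreover have "f summable_on uminus ` range int"
    using summable_on_reindex[of uminus "range int" f] \<open>f summable_on range int\<close> even_f
    by (simp add: o_def)
  moreover have "range int \<union> uminus ` range int = UNIV"
    by (auto intro: image_eqI[where x = "- _"] simp: image_iff) presburger
  ultimately show ?thesis
    by (metis summable_on_union)
qed

lemma summable_on_exp_neg_square_int:
  fixes a :: real assumes "a > 0"
  shows "(\<lambda>n::int. exp (- (real_of_int n)\<^sup>2 / a)) summable_on UNIV"
  using summable_on_exp_neg_square_nat[OF assms] by (intro summable_on_int_if_even) simp_all

lemma c_w_summable:
  assumes "w \<noteq> 0"
  shows "(\<lambda>y::int. exp (- (real_of_int y)\<^sup>2 / (2 * w\<^sup>2))) summable_on UNIV"
  using assms by (intro summable_on_exp_neg_square_int) simp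

lemma c_w_pos:
  assumes "w \<noteq> 0"
  shows "c_w w > 0"
proof -
  have "(\<Sum>\<^sub>\<infinity>y\<in>{0::int}. exp (- (real_of_int y)\<^sup>2 / (2 * w\<^sup>2))) \<le> c_w w"
    unfolding c_w_def using c_w_summable[OF assms] by (intro infsum_mono_neutral) auto
  then show ?thesis
    by simp
qed

lemma c_w_shift:
  "(\<Sum>\<^sub>\<infinity>y::int. exp (- (real_of_int (y + k))\<^sup>2 / (2 * w\<^sup>2))) = c_w w"
  unfolding c_w_def by (rule infsum_reindex_bij_betw[OF bij_plus_right])

lemma c_w_shift_summable:
  assumes "w \<noteq> 0"
  shows "(\<lambda>y::int. exp (- (real_of_int (y + k))\<^sup>2 / (2 * w\<^sup>2))) summable_on UNIV"
  using summable_on_reindex_bij_betw[OF bij_plus_right[of k],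
      where f = "\<lambda>y::int. exp (- (real_of_int y)\<^sup>2 / (2 * w\<^sup>2))"]
    c_w_summable[OF assms]
  by blast

lemma gauss_overlap_summable:
  assumes "w \<noteq> 0"
  shows "(\<lambda>y::int. exp (- ((real_of_int (y + z))\<^sup>2 + (real_of_int y)\<^sup>2) / (4 * w\<^sup>2)))
           summable_on UNIV"
proof (rule summable_on_comparison_test)
  show "(\<lambda>y::int. exp (- (real_of_int y)\<^sup>2 / (4 * w\<^sup>2))) summable_on UNIV"
    using assms by (intro summable_on_exp_neg_square_int) simp
  show "exp (- ((real_of_int (y + z))\<^sup>2 + (real_of_int y)\<^sup>2) / (4 * w\<^sup>2))
          \<le> exp (- (real_of_int y)\<^sup>2 / (4 * w\<^sup>2))" for y
    using divide_right_mono[of "- ((real_of_int (y + z))\<^sup>2 + (real_of_int y)\<^sup>2)"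
        "- (real_of_int y)\<^sup>2" "4 * w\<^sup>2"]
    by simp
qed simp

lemma exp_overlap_complete_square:
  fixes y k w :: real
  shows "exp (- ((y + 2 * k)\<^sup>2 + y\<^sup>2) / (4 * w\<^sup>2))
         = exp (- (2 * k)\<^sup>2 / (8 * w\<^sup>2)) * exp (- (y + k)\<^sup>2 / (2 * w\<^sup>2))"
  unfolding mult_exp_exp by (cases "w = 0") (simp_all add: field_simps power2_eq_square)

lemma exp_midpoint_le:
  fixes a b :: real
  shows "2 * exp ((a + b) / 2) \<le> exp a + exp b"
  using convex_onD[OF exp_convex, of "1/2" a b] by (simp add: add_divide_distrib)

lemma exp_overlap_pair_ge:
  fixes y k w :: real
  shows "2 * (exp (- ((2 * k + 1)\<^sup>2 + 1) / (8 * w\<^sup>2)) * exp (- (y + k)\<^sup>2 / (2 * w\<^sup>2)))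
         \<le> exp (- ((y + (2 * k + 1))\<^sup>2 + y\<^sup>2) / (4 * w\<^sup>2))
           + exp (- ((y - 1 + (2 * k + 1))\<^sup>2 + (y - 1)\<^sup>2) / (4 * w\<^sup>2))"
proof -
  have "(- ((y + (2 * k + 1))\<^sup>2 + y\<^sup>2) / (4 * w\<^sup>2)
          + - ((y - 1 + (2 * k + 1))\<^sup>2 + (y - 1)\<^sup>2) / (4 * w\<^sup>2)) / 2
        = - ((2 * k + 1)\<^sup>2 + 1) / (8 * w\<^sup>2) + - (y + k)\<^sup>2 / (2 * w\<^sup>2)"
    (is "?mid = _")
    by (cases "w = 0") (simp_all add: field_simps power2_eq_square)
  moreover have "2 * exp ?mid \<le> exp (- ((y + (2 * k + 1))\<^sup>2 + y\<^sup>2) / (4 * w\<^sup>2))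
                   + exp (- ((y - 1 + (2 * k + 1))\<^sup>2 + (y - 1)\<^sup>2) / (4 * w\<^sup>2))"
    by (rule exp_midpoint_le)
  ultimately show ?thesis
    by (simp only: mult_exp_exp)
qed

definition gauss_overlap :: "real \<Rightarrow> int \<Rightarrow> real" where
  "gauss_overlap w z =
     (\<Sum>\<^sub>\<infinity>y::int. exp (- ((real_of_int (y + z))\<^sup>2 + (real_of_int y)\<^sup>2) / (4 * w\<^sup>2)))"

lemma gauss_overlap_even:
  assumes "even z"
  shows "gauss_overlap w z = exp (- (real_of_int z)\<^sup>2 / (8 * w\<^sup>2)) * c_w w"
proof -
  obtain k where z: "z = 2 * k"
    using assms by blast
  have "gauss_overlap w z = (\<Sum>\<^sub>\<infinity>y::int.
          exp (- (real_of_int z)\<^sup>2 / (8 * w\<^sup>2)) * exp (- (real_of_int (y + k))\<^sup>2 / (2 * w\<^sup>2)))"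
    unfolding gauss_overlap_def z
    using exp_overlap_complete_square[where k = "real_of_int k"] by simp
  also have "\<dots> = exp (- (real_of_int z)\<^sup>2 / (8 * w\<^sup>2)) * c_w w"
    by (simp only: infsum_cmult_right' c_w_shift)
  finally show ?thesis .
qed

lemma gauss_overlap_odd:
  assumes "w \<noteq> 0" and "odd z"
  shows "exp (- ((real_of_int z)\<^sup>2 + 1) / (8 * w\<^sup>2)) * c_w w \<le> gauss_overlap w z"
proof -
  obtain k where z: "z = 2 * k + 1"
    using \<open>odd z\<close> by (metis oddE)
  define T where "T y = exp (- ((real_of_int (y + z))\<^sup>2 + (real_of_int y)\<^sup>2) / (4 * w\<^sup>2))" for y
  define E where "E = exp (- ((real_of_int z)\<^sup>2 + 1) / (8 * w\<^sup>2))"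
  define G where "G y = exp (- (real_of_int (y + k))\<^sup>2 / (2 * w\<^sup>2))" for y
  have T_summable: "T summable_on UNIV"
    using gauss_overlap_summable[OF \<open>w \<noteq> 0\<close>] unfolding T_def by blast
  then have T_shift_summable: "(\<lambda>y. T (y - 1)) summable_on UNIV"
    using summable_on_reindex_bij_betw[OF bij_diff_right[of "1::int"], where f = T] by blast
  have pair_ge: "2 * (E * G y) \<le> T y + T (y - 1)" for y
    using exp_overlap_pair_ge[where y = "real_of_int y" and k = "real_of_int k"]
    unfolding E_def G_def T_def z by simp
  have "2 * (E * c_w w) = (\<Sum>\<^sub>\<infinity>y. 2 * (E * G y))"
    unfolding G_def by (simp only: infsum_cmult_right' c_w_shift)
  also have "\<dots> \<le> (\<Sum>\<^sub>\<infinity>y. T y + T (y - 1))"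
    using c_w_shift_summable[OF \<open>w \<noteq> 0\<close>] T_summable T_shift_summable pair_ge
    unfolding G_def by (intro infsum_mono summable_on_cmult_right summable_on_add) auto
  also have "\<dots> = 2 * gauss_overlap w z"
    using infsum_reindex_bij_betw[OF bij_diff_right, of T 1] T_summable T_shift_summable
    unfolding gauss_overlap_def T_def by (simp only: infsum_add mult_2)
  finally show ?thesis
    unfolding E_def by simp
qed

lemma odd_square_add_one_le_even_square:
  fixes z h :: int
  assumes "odd z" and "even h" and "\<bar>z\<bar> \<le> h"
  shows "z\<^sup>2 + 1 \<le> h\<^sup>2"
proof -
  have "\<bar>z\<bar> \<noteq> h"
    using assms by auto
  then have "(\<bar>z\<bar> + 1)\<^sup>2 \<le> h\<^sup>2"
    using \<open>\<bar>z\<bar> \<le> h\<close> by (intro power_mono) auto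
  then show ?thesis
    by (simp add: power2_eq_square algebra_simps)
qed

lemma gauss_overlap_ge:
  assumes "w \<noteq> 0" and "even h" and "\<bar>z\<bar> \<le> h"
  shows "exp (- (real_of_int h)\<^sup>2 / (8 * w\<^sup>2)) * c_w w \<le> gauss_overlap w z"
proof -
  have scale_mono: "exp (- (real_of_int h)\<^sup>2 / (8 * w\<^sup>2)) * c_w w \<le> exp (- q / (8 * w\<^sup>2)) * c_w w"
    if "q \<le> (real_of_int h)\<^sup>2" for q
  proof -
    have "- (real_of_int h)\<^sup>2 / (8 * w\<^sup>2) \<le> - q / (8 * w\<^sup>2)"
      using that by (intro divide_right_mono) simp_all
    then show ?thesis
      using c_w_pos[OF \<open>w \<noteq> 0\<close>] by (intro mult_right_mono) simp_all
  qed
  show ?thesis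
  proof (cases "even z")
    case True
    have "real_of_int (z\<^sup>2) \<le> real_of_int (h\<^sup>2)"
      using \<open>\<bar>z\<bar> \<le> h\<close> power_mono[of "\<bar>z\<bar>" h 2] by (simp only: of_int_le_iff) simp
    then have "(real_of_int z)\<^sup>2 \<le> (real_of_int h)\<^sup>2"
      by simp
    from scale_mono[OF this] show ?thesis
      unfolding gauss_overlap_even[OF True] .
  next
    case False
    have "real_of_int (z\<^sup>2 + 1) \<le> real_of_int (h\<^sup>2)"
      using odd_square_add_one_le_even_square[OF False assms(2,3)] by (simp only: of_int_le_iff)
    then have "(real_of_int z)\<^sup>2 + 1 \<le> (real_of_int h)\<^sup>2"
      by simp
    from order_trans[OF scale_mono[OF this] gauss_overlap_odd[OF assms(1) False]] show ?thesis .
  qed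
qed

theorem lemma3:
  fixes w :: real and x h :: int and s :: int
  assumes "w > 0" and "\<bar>x\<bar> \<le> h" and "even h" and "s \<in> {1, -1}"
  shows "(1 / c_w w) * (\<Sum>\<^sub>\<infinity>y\<in>(UNIV::int set).
            exp (- ((real_of_int (y + s * x))\<^sup>2 + (real_of_int y)\<^sup>2) / (4 * w\<^sup>2)))
         \<ge> exp (- (real_of_int h)\<^sup>2 / (8 * w\<^sup>2))"
proof -
  have "w \<noteq> 0"
    using \<open>w > 0\<close> by simp
  have "\<bar>s * x\<bar> \<le> h"
    using assms(2,4) by auto
  then have "exp (- (real_of_int h)\<^sup>2 / (8 * w\<^sup>2)) * c_w w \<le> gauss_overlap w (s * x)"
    using gauss_overlap_ge \<open>w \<noteq> 0\<close> \<open>even h\<close> by blast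
  then have "exp (- (real_of_int h)\<^sup>2 / (8 * w\<^sup>2)) \<le> gauss_overlap w (s * x) / c_w w"
    using c_w_pos[OF \<open>w \<noteq> 0\<close>] by (simp add: pos_le_divide_eq)
  then show ?thesis
    unfolding gauss_overlap_def by simp
qed

end
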